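(* Let $p$ be a prime and let $G$ be a finite irreducible subgroup of $\mathrm{M}(p,\mathbb{C})$. Then $\mathrm{D}(p,\mathbb{C})\cap G$ is a maximal abelian normal subgroup of $G$.
   Context: $\mathrm{M}(p,\mathbb{C})$ is the group of monomial matrices in $\mathrm{GL}(p,\mathbb{C})$ and $\mathrm{D}(p,\mathbb{C})$ is the group of invertible diagonal matrices. *)

theory Defs
  imports "HOL-Analysis.Analysis"
begin

text \<open>Complex p x p matrices are rendered as complex^'n^'n with CARD('n) = p.\<close>

definition monomial_mat :: "complex^'n^'n \<Rightarrow> bool" where
  "monomial_mat A \<longleftrightarrow> invertible A \<and> (\<forall>i. \<exists>!j. A$i$j \<noteq> 0) \<and> (\<forall>j. \<exists>!i. A$i$j \<noteq> 0)"

definition diag_mat :: "complex^'n^'n \<Rightarrow> bool" where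
  "diag_mat A \<longleftrightarrow> invertible A \<and> (\<forall>i j. i \<noteq> j \<longrightarrow> A$i$j = 0)"

definition Mon_group :: "(complex^'n^'n) set" where
  "Mon_group = {A. monomial_mat A}"

definition Diag_group :: "(complex^'n^'n) set" where
  "Diag_group = {A. diag_mat A}"

definition mgrp_subgroup :: "(complex^'n^'n) set \<Rightarrow> bool" where
  "mgrp_subgroup H \<longleftrightarrow> H \<subseteq> {A. invertible A} \<and> mat 1 \<in> H \<and>
     (\<forall>A\<in>H. \<forall>B\<in>H. A ** B \<in> H) \<and> (\<forall>A\<in>H. matrix_inv A \<in> H)"

definition mgrp_normal :: "(complex^'n^'n) set \<Rightarrow> (complex^'n^'n) set \<Rightarrow> bool" where
  "mgrp_normal N G \<longleftrightarrow> mgrp_subgroup N \<and> N \<subseteq> G \<and>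
     (\<forall>g\<in>G. \<forall>h\<in>N. g ** h ** matrix_inv g \<in> N)"

definition mgrp_abelian :: "(complex^'n^'n) set \<Rightarrow> bool" where
  "mgrp_abelian H \<longleftrightarrow> (\<forall>A\<in>H. \<forall>B\<in>H. A ** B = B ** A)"

definition maximal_abelian_normal :: "(complex^'n^'n) set \<Rightarrow> (complex^'n^'n) set \<Rightarrow> bool" where
  "maximal_abelian_normal N G \<longleftrightarrow> mgrp_normal N G \<and> mgrp_abelian N \<and>
     (\<forall>N'. mgrp_normal N' G \<and> mgrp_abelian N' \<and> N \<subseteq> N' \<longrightarrow> N' = N)"

text \<open>Complex-linear subspaces of complex^'n (HOL-Analysis' subspace is real-linear).\<close>
definition csubspace_vec :: "(complex^'n) set \<Rightarrow> bool" where
  "csubspace_vec W \<longleftrightarrow> 0 \<in> W \<and> (\<forall>v\<in>W. \<forall>w\<in>W. v + w \<in> W) \<and> (\<forall>c. \<forall>v\<in>W. c *s v \<in> W)"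

definition irreducible_mgrp :: "(complex^'n^'n) set \<Rightarrow> bool" where
  "irreducible_mgrp G \<longleftrightarrow>
     (\<forall>W. csubspace_vec W \<and> (\<forall>A\<in>G. \<forall>v\<in>W. A *v v \<in> W) \<longrightarrow> W = {0} \<or> W = UNIV)"

end

theory Submission
  imports Defs "HOL-Combinatorics.Orbits"
begin

(* Write mon_perm g for the permutation underlying a monomial matrix g; on G its kernel is
   D \<inter> G, which is therefore an abelian normal subgroup. Let N \<supseteq> D \<inter> G be an abelian normal
   subgroup containing a non-diagonal n. Irreducibility makes mon_perm ` G transitive, so the
   orbits of mon_perm ` N are blocks of equal size partitioning p points: N is transitive, hence,
   being abelian, regular, and the same argument applied to the cycles of mon_perm n shows that
   mon_perm n is a p-cycle. A monomial matrix whose permutation is a p-cycle has an eigenvalue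
   with a one-dimensional eigenspace C v, and v is then a common eigenvector of N. By regularity
   an element of G fixing a point a and its image under mon_perm n commutes with mon_perm n and
   so fixes every point; hence the stabiliser of a in mon_perm ` G has at most p - 1 elements and
   G = R (D \<inter> G) N for some set R of at most p - 1 matrices. The G-orbit of v then spans a
   G-invariant subspace of dimension at most p - 1, contradicting irreducibility. *)

definition mon_perm :: "complex^'n^'n \<Rightarrow> 'n \<Rightarrow> 'n" where
  "mon_perm A i = (THE j. A$j$i \<noteq> 0)"

lemma monomial_mat_nonzero_iff:
  assumes "monomial_mat A"
  shows "A$j$i \<noteq> 0 \<longleftrightarrow> j = mon_perm A i"
proof -
  from assms have unique: "\<exists>!j. A$j$i \<noteq> 0" unfolding monomial_mat_def by blast
  then have "A$(mon_perm A i)$i \<noteq> 0" unfolding mon_perm_def by (rule theI')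
  with unique show ?thesis by blast
qed

lemma monomial_mat_perm_entry_nonzero: "monomial_mat A \<Longrightarrow> A$(mon_perm A i)$i \<noteq> 0"
  using monomial_mat_nonzero_iff by blast

lemma bij_mon_perm:
  assumes "monomial_mat A"
  shows "bij (mon_perm A)"
proof -
  have "inj (mon_perm A)"
  proof (rule injI)
    fix x y assume "mon_perm A x = mon_perm A y"
    then have "A$(mon_perm A x)$x \<noteq> 0" "A$(mon_perm A x)$y \<noteq> 0"
      using monomial_mat_nonzero_iff[OF assms] by auto
    moreover from assms have "\<exists>!j. A$(mon_perm A x)$j \<noteq> 0" unfolding monomial_mat_def by blast
    ultimately show "x = y" by blast
  qed
  then show ?thesis by (simp add: bij_def finite_UNIV_inj_surj)
qed

lemma matrix_mult_monomial_component:
  assumes "monomial_mat B"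
  shows "(A ** B)$k$i = A$k$(mon_perm B i) * B$(mon_perm B i)$i"
proof -
  have "(A ** B)$k$i = (\<Sum>l\<in>UNIV. if l = mon_perm B i then A$k$l * B$l$i else 0)"
    unfolding matrix_matrix_mult_def vec_lambda_beta
    by (rule sum.cong) (use monomial_mat_nonzero_iff[OF assms] in auto)
  then show ?thesis by simp
qed

lemma mon_perm_matrix_mult:
  assumes "monomial_mat A" "monomial_mat B" "monomial_mat (A ** B)"
  shows "mon_perm (A ** B) = mon_perm A \<circ> mon_perm B"
proof
  fix i
  have "(A ** B)$(mon_perm A (mon_perm B i))$i \<noteq> 0"
    using assms(1,2) by (simp add: matrix_mult_monomial_component monomial_mat_perm_entry_nonzero)
  then show "mon_perm (A ** B) i = (mon_perm A \<circ> mon_perm B) i"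
    using monomial_mat_nonzero_iff[OF assms(3)] by simp
qed

lemma mon_perm_mat1 [simp]: "mon_perm (mat 1) = id"
  unfolding mon_perm_def by (auto simp: mat_def)

lemma monomial_mat_diagonal_iff:
  assumes "monomial_mat A"
  shows "(\<forall>i j. i \<noteq> j \<longrightarrow> A$i$j = 0) \<longleftrightarrow> mon_perm A = id"
  using monomial_mat_nonzero_iff[OF assms] by (metis eq_id_iff)

lemma monomial_mat_mult_axis:
  assumes "monomial_mat A"
  shows "A *v axis i c = axis (mon_perm A i) (A$(mon_perm A i)$i * c)"
  unfolding vec_eq_iff
proof
  fix k
  have "(A *v axis i c)$k = A$k$i * c"
    unfolding matrix_vector_mult_def axis_def by (simp add: if_distrib[of "times _"] cong: if_cong)
  then show "(A *v axis i c)$k = axis (mon_perm A i) (A$(mon_perm A i)$i * c)$k"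
    using monomial_mat_nonzero_iff[OF assms, of k i] by (auto simp: axis_def)
qed

lemma matrix_vector_mult_monomial_component:
  assumes "monomial_mat A"
  shows "(A *v x)$(mon_perm A i) = A$(mon_perm A i)$i * x$i"
proof -
  have "A$(mon_perm A i)$l = 0" if "l \<noteq> i" for l
    using that monomial_mat_nonzero_iff[OF assms, of "mon_perm A i" l]
      bij_mon_perm[OF assms, THEN bij_is_inj] by (auto dest: injD)
  then have "(A *v x)$(mon_perm A i) = (\<Sum>l\<in>UNIV. if l = i then A$(mon_perm A i)$l * x$l else 0)"
    unfolding matrix_vector_mult_def vec_lambda_beta by (intro sum.cong) auto
  then show ?thesis by simp
qed

lemma invariant_partition_prime_card:
  fixes B :: "'a::finite \<Rightarrow> 'a set" and P :: "('a \<Rightarrow> 'a) set"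
  assumes "prime CARD('a)"
    and transitive: "\<And>i j. \<exists>f\<in>P. f i = j"
    and inj: "\<And>f. f \<in> P \<Longrightarrow> inj f"
    and invariant: "\<And>f i. f \<in> P \<Longrightarrow> f ` B i \<subseteq> B (f i)"
    and self_mem: "\<And>i. i \<in> B i"
    and class_eq: "\<And>i j. j \<in> B i \<Longrightarrow> B j = B i"
  shows "(\<forall>i. B i = {i}) \<or> (\<forall>i. B i = UNIV)"
proof -
  have card_le: "card (B i) \<le> card (B j)" for i j
  proof -
    obtain f where f: "f \<in> P" "f i = j" using transitive by blast
    have "card (B i) = card (f ` B i)" using inj[OF f(1)] by (simp add: card_image inj_on_subset)
    also have "\<dots> \<le> card (B j)" using invariant[OF f(1), of i] f(2) by (simp add: card_mono)
    finally show ?thesis .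
  qed
  obtain k where card_eq: "\<And>i. card (B i) = k"
    using card_le by (metis antisym)
  have disjoint: "B i \<inter> B j = {}" if "B i \<noteq> B j" for i j
    using that class_eq by blast
  have "k * card (range B) = card (\<Union>(range B))"
    by (rule card_partition) (use card_eq disjoint in auto)
  also have "\<Union>(range B) = UNIV" using self_mem by blast
  finally have "k = 1 \<or> k = CARD('a)"
    using \<open>prime CARD('a)\<close> by (metis dvd_triv_left prime_nat_iff)
  then show ?thesis
  proof
    assume "k = 1"
    then have "B i = {i}" for i using card_eq[of i] self_mem[of i] by (metis card_1_singletonE singletonD)
    then show ?thesis by blast
  next
    assume "k = CARD('a)"
    then have "B i = UNIV" for i using card_eq[of i] by (intro card_subset_eq) auto
    then show ?thesis by blast
  qed
qed

lemma funpow_eigenvector_sum: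
  fixes A :: "'a::field^'n^'n" and e :: "'a^'n"
  assumes "\<mu> \<noteq> 0" and "0 < q" and period: "((*v) A ^^ q) e = \<mu> ^ q *s e"
  defines "v \<equiv> \<Sum>t<q. inverse \<mu> ^ t *s ((*v) A ^^ t) e"
  shows "A *v v = \<mu> *s v"
proof -
  define g where "g t = inverse \<mu> ^ t *s ((*v) A ^^ t) e" for t
  have v_g: "v = (\<Sum>t<q. g t)" unfolding v_def g_def ..
  have g_Suc: "A *v g t = \<mu> *s g (Suc t)" for t
    using \<open>\<mu> \<noteq> 0\<close> by (simp add: g_def vector_scalar_commute power_Suc field_simps)
  have "g q = g 0"
    using period \<open>\<mu> \<noteq> 0\<close> by (simp add: g_def power_inverse field_simps)
  then have shift: "(\<Sum>t<q. g (Suc t)) = (\<Sum>t<q. g t)"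
    using sum.lessThan_Suc_shift[of g q] sum.lessThan_Suc[of g q] by simp
  have "A *v v = (\<Sum>t<q. A *v g t)"
    unfolding v_g by (rule vec.linear_sum[OF matrix_vector_mul_linear_gen])
  also have "\<dots> = \<mu> *s (\<Sum>t<q. g (Suc t))"
    by (simp add: g_Suc vec.scale_sum_right)
  finally show ?thesis unfolding shift v_g .
qed

lemma monomial_mat_funpow_axis:
  assumes "monomial_mat A" and "c \<noteq> 0"
  shows "\<exists>d. d \<noteq> 0 \<and> ((*v) A ^^ t) (axis i c) = axis ((mon_perm A ^^ t) i) d"
proof (induction t)
  case 0
  then show ?case using \<open>c \<noteq> 0\<close> by auto
next
  case (Suc t)
  then obtain d where "d \<noteq> 0" and d: "((*v) A ^^ t) (axis i c) = axis ((mon_perm A ^^ t) i) d"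
    by blast
  let ?j = "(mon_perm A ^^ t) i"
  have "((*v) A ^^ Suc t) (axis i c) = axis (mon_perm A ?j) (A$(mon_perm A ?j)$?j * d)"
    using d monomial_mat_mult_axis[OF assms(1)] by simp
  moreover have "A$(mon_perm A ?j)$?j * d \<noteq> 0"
    using \<open>d \<noteq> 0\<close> monomial_mat_perm_entry_nonzero[OF assms(1)] by simp
  ultimately show ?case by (intro exI[of _ "A$(mon_perm A ?j)$?j * d"]) simp
qed

lemma monomial_eigenvector_zero_step:
  assumes "monomial_mat A" "A *v z = \<mu> *s z" "\<mu> \<noteq> 0" "z$i = 0"
  shows "z$(mon_perm A i) = 0"
  using matrix_vector_mult_monomial_component[OF assms(1), of z i] assms(2-4) by simp

lemma cyclic_monomial_eigenvector:
  fixes A :: "complex^'n^'n"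
  assumes A: "monomial_mat A" and cyclic: "cyclic_on (mon_perm A) UNIV"
  shows "\<exists>\<mu> v. \<mu> \<noteq> 0 \<and> A *v v = \<mu> *s v \<and> v$a = 1"
proof -
  let ?r = "mon_perm A"
  define q where "q = funpow_dist1 ?r a a"
  have "(?r ^^ q) a = a"
    unfolding q_def using cyclic by (intro funpow_dist1_prop) (simp add: cyclic_on_alldef)
  have return_first: "(?r ^^ t) a \<noteq> a" if "0 < t" "t < q" for t
    using that unfolding q_def by (rule funpow_dist1_least)
  define e :: "complex^'n" where "e = axis a 1"
  have power_e: "\<exists>d. d \<noteq> 0 \<and> ((*v) A ^^ t) e = axis ((?r ^^ t) a) d" for t
    unfolding e_def using monomial_mat_funpow_axis[OF A] by simp
  then obtain \<kappa> where "\<kappa> \<noteq> 0" "((*v) A ^^ q) e = axis a \<kappa>"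
    using power_e[of q] \<open>(?r ^^ q) a = a\<close> by auto
  moreover obtain \<mu> where "\<mu> \<noteq> 0" "\<kappa> = \<mu> ^ q"
    using exists_complex_root_nonzero[OF \<open>\<kappa> \<noteq> 0\<close>] q_def by blast
  ultimately have period: "((*v) A ^^ q) e = \<mu> ^ q *s e"
    by (simp add: e_def vec_eq_iff axis_def)
  define v where "v = (\<Sum>t<q. inverse \<mu> ^ t *s ((*v) A ^^ t) e)"
  have "A *v v = \<mu> *s v"
    unfolding v_def by (rule funpow_eigenvector_sum[OF \<open>\<mu> \<noteq> 0\<close> _ period]) (simp add: q_def)
  moreover have "v$a = (\<Sum>t<q. if t = 0 then 1 else 0)"
    unfolding v_def sum_component
  proof (rule sum.cong)
    fix t assume "t \<in> {..<q}"
    then show "(inverse \<mu> ^ t *s ((*v) A ^^ t) e)$a = (if t = 0 then 1 else 0)"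
      using power_e[of t] return_first[of t] by (auto simp: e_def axis_def)
  qed simp
  then have "v$a = 1" by (simp add: q_def)
  ultimately show ?thesis using \<open>\<mu> \<noteq> 0\<close> by blast
qed

lemma cyclic_monomial_eigenvector_unique:
  fixes A :: "complex^'n^'n"
  assumes A: "monomial_mat A" and cyclic: "cyclic_on (mon_perm A) UNIV" and "\<mu> \<noteq> 0"
    and eigen: "A *v v = \<mu> *s v" "A *v u = \<mu> *s u" and "v$a = 1"
  shows "u = u$a *s v"
proof -
  define z where "z = u - u$a *s v"
  have z_eigen: "A *v z = \<mu> *s z"
    unfolding z_def
    by (simp add: eigen matrix_vector_mult_diff_distrib vector_scalar_commute
        vec.scale_right_diff_distrib vec.scale_left_commute)
  have "z$k = 0" if "k \<in> orbit (mon_perm A) a" for k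
    using that
  proof induction
    case base
    have "z$a = 0" using \<open>v$a = 1\<close> by (simp add: z_def)
    then show ?case by (rule monomial_eigenvector_zero_step[OF A z_eigen \<open>\<mu> \<noteq> 0\<close>])
  next
    case (step y)
    from step.IH show ?case by (rule monomial_eigenvector_zero_step[OF A z_eigen \<open>\<mu> \<noteq> 0\<close>])
  qed
  then have "z = 0" using cyclic by (simp add: vec_eq_iff cyclic_on_alldef)
  then show ?thesis by (simp add: z_def)
qed

lemma cyclic_monomial_eigenline:
  fixes A :: "complex^'n^'n"
  assumes "monomial_mat A" "cyclic_on (mon_perm A) UNIV"
  shows "\<exists>\<mu> v. v \<noteq> 0 \<and> A *v v = \<mu> *s v \<and>
    (\<forall>u. A *v u = \<mu> *s u \<longrightarrow> (\<exists>c. u = c *s v))"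
proof -
  fix a :: 'n
  obtain \<mu> v where "\<mu> \<noteq> 0" "A *v v = \<mu> *s v" "v$a = 1"
    using cyclic_monomial_eigenvector[OF assms] by blast
  moreover have "v \<noteq> 0" using \<open>v$a = 1\<close> by auto
  ultimately show ?thesis
    using cyclic_monomial_eigenvector_unique[OF assms] by blast
qed

lemma matrix_inv_right: "invertible A \<Longrightarrow> A ** matrix_inv A = mat 1"
  and matrix_inv_left: "invertible A \<Longrightarrow> matrix_inv A ** A = mat 1"
  unfolding invertible_def matrix_inv_def by (metis (mono_tags, lifting) someI_ex)+

lemma matrix_inv_cancel_left: "invertible A \<Longrightarrow> A ** (matrix_inv A ** B) = B"
  by (simp add: matrix_mul_assoc matrix_inv_right)

lemma matrix_inv_cancel_right: "invertible A \<Longrightarrow> B ** A ** matrix_inv A = B"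
  by (simp add: matrix_inv_right flip: matrix_mul_assoc)

lemma diag_mat_mult_commute:
  assumes "diag_mat A" "diag_mat B"
  shows "A ** B = B ** A"
proof -
  have diag_mult: "(X ** Y)$i$j = X$i$i * Y$i$j" if "diag_mat X" for X Y :: "complex^'n^'n" and i j
    using that unfolding diag_mat_def matrix_matrix_mult_def
    by (simp add: sum.neutral[where A = "UNIV - {i}"] sum.remove[of UNIV i])
  show ?thesis
    using assms unfolding vec_eq_iff diag_mult[OF assms(1)] diag_mult[OF assms(2)] diag_mat_def
    by (metis mult.commute mult_zero_right)
qed

lemma csubspace_vec_span: "csubspace_vec (vec.span X)"
  unfolding csubspace_vec_def using vec.span_zero vec.span_add vec.span_scale by blast

locale monomial_group =
  fixes G :: "(complex^'n^'n) set"
  assumes subgroup: "mgrp_subgroup G" and monomial: "G \<subseteq> Mon_group"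
begin

lemma monomial_mat_mem: "g \<in> G \<Longrightarrow> monomial_mat g"
  using monomial by (auto simp: Mon_group_def)

lemma one_mem: "mat 1 \<in> G"
  and mult_mem: "g \<in> G \<Longrightarrow> h \<in> G \<Longrightarrow> g ** h \<in> G"
  and inv_mem: "g \<in> G \<Longrightarrow> matrix_inv g \<in> G"
  and invertible_mem: "g \<in> G \<Longrightarrow> invertible g"
  using subgroup by (auto simp: mgrp_subgroup_def)

lemma mon_perm_mult: "g \<in> G \<Longrightarrow> h \<in> G \<Longrightarrow> mon_perm (g ** h) = mon_perm g \<circ> mon_perm h"
  by (intro mon_perm_matrix_mult monomial_mat_mem mult_mem)

lemma mon_perm_inv: "g \<in> G \<Longrightarrow> mon_perm (matrix_inv g) = inv (mon_perm g)"
  by (metis inv_unique_comp inv_mem invertible_mem matrix_inv_left matrix_inv_right mon_perm_mat1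
      mon_perm_mult)

lemma mon_perm_inv_apply [simp]:
  "g \<in> G \<Longrightarrow> mon_perm (matrix_inv g) (mon_perm g i) = i"
  "g \<in> G \<Longrightarrow> mon_perm g (mon_perm (matrix_inv g) i) = i"
  using bij_mon_perm[OF monomial_mat_mem] by (auto simp: mon_perm_inv bij_is_inj bij_is_surj surj_f_inv_f)

lemma mon_perm_inj [simp]: "g \<in> G \<Longrightarrow> mon_perm g i = mon_perm g j \<longleftrightarrow> i = j"
  using bij_mon_perm[OF monomial_mat_mem] by (auto dest: bij_is_inj injD)

lemma Diag_group_iff: "g \<in> G \<Longrightarrow> g \<in> Diag_group \<longleftrightarrow> mon_perm g = id"
  unfolding Diag_group_def diag_mat_def
  using monomial_mat_diagonal_iff[OF monomial_mat_mem] invertible_mem by auto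

lemma Diag_inter_normal: "mgrp_normal (Diag_group \<inter> G) G"
proof -
  have inv_id: "mon_perm (matrix_inv h) = id" if "h \<in> G" "mon_perm h = id" for h
    using that by (simp add: mon_perm_inv)
  have conj_id: "mon_perm (g ** h ** matrix_inv g) = id" if "g \<in> G" "h \<in> G" "mon_perm h = id" for g h
    using that by (simp add: mon_perm_mult mult_mem inv_mem fun_eq_iff)
  show ?thesis
    unfolding mgrp_normal_def mgrp_subgroup_def
    using inv_id conj_id by (auto simp: Diag_group_iff mon_perm_mult one_mem mult_mem inv_mem invertible_mem)
qed

lemma Diag_inter_abelian: "mgrp_abelian (Diag_group \<inter> G)"
  unfolding mgrp_abelian_def Diag_group_def using diag_mat_mult_commute by blast

lemma inv_mult_Diag_of_mon_perm_eq:
  assumes "s \<in> G" "h \<in> G" "mon_perm s = mon_perm h"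
  shows "matrix_inv s ** h \<in> Diag_group \<inter> G"
proof -
  have "mon_perm (matrix_inv s ** h) = id"
    using assms by (simp add: mon_perm_mult inv_mem fun_eq_iff flip: assms(3))
  then show ?thesis using Diag_group_iff assms by (blast intro: mult_mem inv_mem)
qed

lemma support_invariant:
  assumes closed: "\<And>h i. h \<in> G \<Longrightarrow> i \<in> S \<Longrightarrow> mon_perm h i \<in> S"
    and "g \<in> G" and supp: "\<forall>k. k \<notin> S \<longrightarrow> x$k = 0" and "k \<notin> S"
  shows "(g *v x)$k = 0"
proof -
  obtain i where k: "k = mon_perm g i"
    using bij_mon_perm[OF monomial_mat_mem[OF \<open>g \<in> G\<close>]] by (metis bij_pointE)
  then have "i \<notin> S" using closed[OF \<open>g \<in> G\<close>] \<open>k \<notin> S\<close> by blast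
  then show ?thesis
    unfolding k matrix_vector_mult_monomial_component[OF monomial_mat_mem[OF \<open>g \<in> G\<close>]]
    using supp by simp
qed

end

locale irreducible_monomial_group = monomial_group G for G :: "(complex^'n^'n) set" +
  assumes irreducible: "irreducible_mgrp G"
begin

lemma invariant_subspace_eq_UNIV:
  assumes "csubspace_vec W" "\<And>g x. g \<in> G \<Longrightarrow> x \<in> W \<Longrightarrow> g *v x \<in> W" "x \<in> W" "x \<noteq> 0"
  shows "W = UNIV"
  using irreducible assms unfolding irreducible_mgrp_def by blast

lemma mon_perm_transitive: "\<exists>g\<in>G. mon_perm g i = j"
proof -
  define S where "S = (\<lambda>g. mon_perm g i) ` G"
  have closed: "mon_perm h k \<in> S" if "h \<in> G" "k \<in> S" for h k
  proof -
    obtain g where "g \<in> G" "k = mon_perm g i" using \<open>k \<in> S\<close> unfolding S_def by blast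
    then have "mon_perm h k = mon_perm (h ** g) i" using \<open>h \<in> G\<close> by (simp add: mon_perm_mult)
    then show ?thesis unfolding S_def using mult_mem \<open>h \<in> G\<close> \<open>g \<in> G\<close> by blast
  qed
  define W where "W = {x :: complex^'n. \<forall>k. k \<notin> S \<longrightarrow> x$k = 0}"
  have "W = UNIV"
  proof (rule invariant_subspace_eq_UNIV)
    show "csubspace_vec W" unfolding csubspace_vec_def W_def by auto
    show "g *v x \<in> W" if "g \<in> G" "x \<in> W" for g x
      using that support_invariant[OF closed] unfolding W_def by blast
    have "i \<in> S" unfolding S_def using one_mem by force
    then show "axis i 1 \<in> W" unfolding W_def axis_def by auto
    show "axis i (1::complex) \<noteq> 0" by (simp add: axis_eq_0_iff)
  qed
  then have "(\<chi> k. 1) \<in> W" by simp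
  then have "j \<in> S" unfolding W_def by auto
  then show ?thesis unfolding S_def by blast
qed

lemma orbit_span_eq_UNIV:
  assumes "v \<noteq> 0"
  shows "vec.span ((\<lambda>g. g *v v) ` G) = UNIV"
proof (rule invariant_subspace_eq_UNIV[OF csubspace_vec_span])
  show "g *v x \<in> vec.span ((\<lambda>g. g *v v) ` G)"
    if "g \<in> G" "x \<in> vec.span ((\<lambda>g. g *v v) ` G)" for g x
  proof -
    have "(*v) g ` (\<lambda>h. h *v v) ` G \<subseteq> (\<lambda>h. h *v v) ` G"
      using \<open>g \<in> G\<close> by (auto simp: matrix_vector_mul_assoc intro: mult_mem)
    then show ?thesis
      using vec.linear_span_image[OF matrix_vector_mul_linear_gen, of g] that(2) vec.span_mono
      by blast
  qed
  show "v \<in> vec.span ((\<lambda>g. g *v v) ` G)"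
    using one_mem by (intro vec.span_base) force
qed (fact assms)

end

locale nondiagonal_abelian_normal_subgroup = irreducible_monomial_group G
  for G :: "(complex^'n^'n) set" +
  fixes N :: "(complex^'n^'n) set" and n :: "complex^'n^'n"
  assumes prime: "prime CARD('n)"
    and normal: "mgrp_normal N G" and abelian: "mgrp_abelian N"
    and n_mem: "n \<in> N" and n_not_diagonal: "mon_perm n \<noteq> id"
begin

lemma N_mem_G: "m \<in> N \<Longrightarrow> m \<in> G"
  and N_one_mem: "mat 1 \<in> N"
  and N_mult_mem: "m \<in> N \<Longrightarrow> m' \<in> N \<Longrightarrow> m ** m' \<in> N"
  and N_inv_mem: "m \<in> N \<Longrightarrow> matrix_inv m \<in> N"
  and N_conj_mem: "g \<in> G \<Longrightarrow> m \<in> N \<Longrightarrow> g ** m ** matrix_inv g \<in> N"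
  using normal by (auto simp: mgrp_normal_def mgrp_subgroup_def)

lemma mon_perm_N_commute:
  "m \<in> N \<Longrightarrow> m' \<in> N \<Longrightarrow> mon_perm m (mon_perm m' i) = mon_perm m' (mon_perm m i)"
  using abelian N_mem_G mon_perm_mult unfolding mgrp_abelian_def by (metis comp_apply)

lemma N_orbit_eq:
  assumes "m \<in> N"
  shows "(\<lambda>m'. mon_perm m' (mon_perm m i)) ` N = (\<lambda>m'. mon_perm m' i) ` N"
proof (intro equalityI image_subsetI)
  fix m' assume "m' \<in> N"
  have "mon_perm m' (mon_perm m i) = mon_perm (m' ** m) i"
    using \<open>m' \<in> N\<close> assms N_mem_G by (simp add: mon_perm_mult)
  then show "mon_perm m' (mon_perm m i) \<in> (\<lambda>m'. mon_perm m' i) ` N"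
    using N_mult_mem[OF \<open>m' \<in> N\<close> assms] by blast
  have "mon_perm m' i = mon_perm (m' ** matrix_inv m) (mon_perm m i)"
    using \<open>m' \<in> N\<close> assms N_mem_G N_inv_mem by (simp add: mon_perm_mult)
  then show "mon_perm m' i \<in> (\<lambda>m'. mon_perm m' (mon_perm m i)) ` N"
    using N_mult_mem[OF \<open>m' \<in> N\<close> N_inv_mem[OF assms]] by blast
qed

lemma N_transitive: "\<exists>m\<in>N. mon_perm m i = j"
proof -
  define B where "B i = (\<lambda>m. mon_perm m i) ` N" for i
  have "(\<forall>i. B i = {i}) \<or> (\<forall>i. B i = UNIV)"
  proof (rule invariant_partition_prime_card[OF prime, where P = "mon_perm ` G"])
    show "\<exists>f\<in>mon_perm ` G. f i = j" for i j
      using mon_perm_transitive by blast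
    show "inj f" if "f \<in> mon_perm ` G" for f
      using that bij_mon_perm[OF monomial_mat_mem] bij_is_inj by blast
    show "f ` B i \<subseteq> B (f i)" if f: "f \<in> mon_perm ` G" for f i
    proof
      fix y assume "y \<in> f ` B i"
      then obtain g m where "g \<in> G" "f = mon_perm g" "m \<in> N" "y = mon_perm g (mon_perm m i)"
        using f unfolding B_def by blast
      then have "y = mon_perm (g ** m ** matrix_inv g) (f i)" and "g ** m ** matrix_inv g \<in> N"
        using N_mem_G N_conj_mem by (auto simp: mon_perm_mult mult_mem inv_mem)
      then show "y \<in> B (f i)" unfolding B_def by blast
    qed
    show "i \<in> B i" for i
      unfolding B_def using N_one_mem by force
    show "B j = B i" if j: "j \<in> B i" for i j
    proof -
      obtain m where "m \<in> N" "j = mon_perm m i" using j unfolding B_def by blast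
      then show ?thesis unfolding B_def using N_orbit_eq by simp
    qed
  qed
  moreover have "\<not> (\<forall>i. B i = {i})"
  proof
    assume "\<forall>i. B i = {i}"
    then have "mon_perm n i = i" for i unfolding B_def using n_mem by blast
    then show False using n_not_diagonal by auto
  qed
  ultimately have "j \<in> B i" by auto
  then show ?thesis unfolding B_def by auto
qed

lemma mon_perm_N_eqI:
  assumes "m1 \<in> N" "m2 \<in> N" "mon_perm m1 i = mon_perm m2 i"
  shows "mon_perm m1 = mon_perm m2"
proof
  fix k
  obtain m where "m \<in> N" and k: "k = mon_perm m i" using N_transitive by metis
  have "mon_perm m1 k = mon_perm m (mon_perm m1 i)"
    unfolding k by (rule mon_perm_N_commute[OF \<open>m1 \<in> N\<close> \<open>m \<in> N\<close>])
  also have "\<dots> = mon_perm m2 k"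
    unfolding k assms(3) by (rule mon_perm_N_commute[OF \<open>m \<in> N\<close> \<open>m2 \<in> N\<close>])
  finally show "mon_perm m1 k = mon_perm m2 k" .
qed

lemma n_fixpoint_free: "mon_perm n i \<noteq> i"
  using mon_perm_N_eqI[OF n_mem N_one_mem, of i] n_not_diagonal by auto

lemma n_cyclic: "cyclic_on (mon_perm n) UNIV"
proof -
  let ?r = "mon_perm n"
  have "permutation ?r"
    using bij_mon_perm[OF monomial_mat_mem[OF N_mem_G[OF n_mem]]] by (simp add: permutation)
  then have self_mem: "i \<in> orbit ?r i" for i
    by (rule permutation_self_in_orbit)
  have "(\<forall>i. orbit ?r i = {i}) \<or> (\<forall>i. orbit ?r i = UNIV)"
  proof (rule invariant_partition_prime_card[OF prime, where P = "mon_perm ` N"])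
    show "\<exists>f\<in>mon_perm ` N. f i = j" for i j
      using N_transitive by blast
    show "inj f" if "f \<in> mon_perm ` N" for f
      using that bij_mon_perm[OF monomial_mat_mem[OF N_mem_G]] by (auto simp: bij_is_inj)
    show "f ` orbit ?r i \<subseteq> orbit ?r (f i)" if f_mem: "f \<in> mon_perm ` N" for f i
    proof -
      obtain m where "m \<in> N" and f: "f = mon_perm m" using f_mem by blast
      have "f ` orbit ?r i = orbit ?r (f i)"
        by (rule orbit_inverse[OF self_mem]) (simp add: f mon_perm_N_commute[OF n_mem \<open>m \<in> N\<close>])
      then show ?thesis by simp
    qed
    show "i \<in> orbit ?r i" for i by (rule self_mem)
    show "orbit ?r j = orbit ?r i" if j: "j \<in> orbit ?r i" for i j
    proof
      show "orbit ?r j \<subseteq> orbit ?r i" using orbit_trans[OF _ j] by blast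
      have "i \<in> orbit ?r j" by (rule orbit_swap[OF self_mem j])
      then show "orbit ?r i \<subseteq> orbit ?r j" using orbit_trans by fast
    qed
  qed
  then have "orbit ?r i = UNIV" for i
    using n_fixpoint_free by (auto simp: orbit_eq_singleton_iff)
  then show ?thesis unfolding cyclic_on_def by blast
qed

lemma stabilizer_of_two_points:
  assumes "h \<in> G" "mon_perm h a = a" "mon_perm h (mon_perm n a) = mon_perm n a"
  shows "mon_perm h = id"
proof -
  let ?r = "mon_perm n" and ?c = "h ** n ** matrix_inv h"
  have c_mem: "?c \<in> N" using N_conj_mem[OF assms(1) n_mem] .
  have c_conj: "mon_perm ?c (mon_perm h x) = mon_perm h (?r x)" for x
    using assms(1) N_mem_G[OF n_mem] by (simp add: mon_perm_mult mult_mem inv_mem)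
  have "mon_perm ?c a = ?r a"
    using c_conj[of a] unfolding assms(2,3) .
  then have "mon_perm ?c = ?r"
    using mon_perm_N_eqI[OF c_mem n_mem] by blast
  then have commute: "mon_perm h (?r x) = ?r (mon_perm h x)" for x
    using c_conj[of x] by simp
  have "mon_perm h x = x" if "x \<in> orbit ?r a" for x
    using that by induction (simp_all add: assms(2) commute)
  then show ?thesis
    using n_cyclic by (auto simp: cyclic_on_alldef)
qed

lemma card_stabilizer_perms:
  "card (mon_perm ` {h \<in> G. mon_perm h a = a}) \<le> CARD('n) - 1"
proof -
  let ?H = "{h \<in> G. mon_perm h a = a}" and ?b = "mon_perm n a"
  have "inj_on (\<lambda>\<tau>. \<tau> ?b) (mon_perm ` ?H)"
  proof (rule inj_onI, clarify)
    fix h1 h2 assume h1: "h1 \<in> G" "mon_perm h1 a = a" and h2: "h2 \<in> G" "mon_perm h2 a = a"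
      and eq: "mon_perm h1 ?b = mon_perm h2 ?b"
    let ?h = "matrix_inv h2 ** h1"
    have "mon_perm (matrix_inv h2) a = a"
      using mon_perm_inv_apply(1)[OF h2(1), of a] h2(2) by simp
    moreover have "mon_perm (matrix_inv h2) (mon_perm h1 ?b) = ?b"
      using mon_perm_inv_apply(1)[OF h2(1), of ?b] eq by simp
    ultimately have "mon_perm ?h = id"
      using h1 h2 by (intro stabilizer_of_two_points[where a = a]) (simp_all add: mult_mem inv_mem mon_perm_mult)
    then have "mon_perm h2 (mon_perm ?h x) = mon_perm h2 x" for x by simp
    then show "mon_perm h1 = mon_perm h2"
      using h1 h2 by (simp add: mon_perm_mult inv_mem fun_eq_iff)
  qed
  moreover have "(\<lambda>\<tau>. \<tau> ?b) ` mon_perm ` ?H \<subseteq> UNIV - {a}"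
  proof
    fix y assume "y \<in> (\<lambda>\<tau>. \<tau> ?b) ` mon_perm ` ?H"
    then obtain h where "h \<in> G" "mon_perm h a = a" "y = mon_perm h ?b" by blast
    then have "y \<noteq> a" using n_fixpoint_free[of a] by (metis mon_perm_inj)
    then show "y \<in> UNIV - {a}" by simp
  qed
  ultimately have "card (mon_perm ` ?H) \<le> card (UNIV - {a})"
    by (intro card_inj_on_le) auto
  then show ?thesis by (simp add: card_Diff_singleton)
qed

lemma stabilizer_mult_N:
  assumes "g \<in> G"
  shows "\<exists>h\<in>G. mon_perm h a = a \<and> (\<exists>m\<in>N. g = h ** m)"
proof -
  obtain m where "m \<in> N" and m_a: "mon_perm m a = mon_perm (matrix_inv g) a"
    using N_transitive by blast
  then have "m \<in> G" using N_mem_G by blast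
  then have "g ** m \<in> G" "mon_perm (g ** m) a = a"
    using assms m_a by (simp_all add: mult_mem mon_perm_mult)
  moreover have "g = g ** m ** matrix_inv m"
    by (rule matrix_inv_cancel_right[OF invertible_mem[OF \<open>m \<in> G\<close>], symmetric])
  ultimately show ?thesis using N_inv_mem[OF \<open>m \<in> N\<close>] by blast
qed

lemma stabilizer_transversal:
  "\<exists>R. finite R \<and> card R \<le> CARD('n) - 1 \<and>
     (\<forall>g\<in>G. \<exists>s\<in>R. \<exists>d\<in>Diag_group \<inter> G. \<exists>m\<in>N. g = s ** d ** m)"
proof -
  fix a :: 'n
  let ?H = "{h \<in> G. mon_perm h a = a}"
  have "\<forall>\<tau>\<in>mon_perm ` ?H. \<exists>h. h \<in> ?H \<and> mon_perm h = \<tau>" by blast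
  from bchoice[OF this] obtain sec
    where sec: "\<And>\<tau>. \<tau> \<in> mon_perm ` ?H \<Longrightarrow> sec \<tau> \<in> ?H \<and> mon_perm (sec \<tau>) = \<tau>"
    by blast
  define R where "R = sec ` mon_perm ` ?H"
  have "finite R" unfolding R_def by simp
  moreover have "card R \<le> CARD('n) - 1"
    unfolding R_def using card_image_le[of "mon_perm ` ?H" sec] card_stabilizer_perms[of a] by simp
  moreover have "\<exists>s\<in>R. \<exists>d\<in>Diag_group \<inter> G. \<exists>m\<in>N. g = s ** d ** m" if "g \<in> G" for g
  proof -
    obtain h m where h: "h \<in> ?H" and "m \<in> N" and g: "g = h ** m"
      using stabilizer_mult_N[OF \<open>g \<in> G\<close>] by blast
    then obtain s where "s \<in> R" "s \<in> G" and perm: "mon_perm s = mon_perm h"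
      using sec unfolding R_def by blast
    have "matrix_inv s ** h \<in> Diag_group \<inter> G"
      using h perm \<open>s \<in> G\<close> by (intro inv_mult_Diag_of_mon_perm_eq) simp_all
    moreover have "g = s ** (matrix_inv s ** h) ** m"
      unfolding g matrix_inv_cancel_left[OF invertible_mem[OF \<open>s \<in> G\<close>]] ..
    ultimately show ?thesis
      using \<open>s \<in> R\<close> \<open>m \<in> N\<close> by fast
  qed
  ultimately show ?thesis by blast
qed

lemma common_eigenvector:
  "\<exists>v. v \<noteq> 0 \<and> (\<forall>m\<in>N. \<exists>c. m *v v = c *s v)"
proof -
  obtain \<mu> v where "v \<noteq> 0" and eigen: "n *v v = \<mu> *s v"
    and line: "\<And>u. n *v u = \<mu> *s u \<Longrightarrow> \<exists>c. u = c *s v"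
    using cyclic_monomial_eigenline[OF monomial_mat_mem[OF N_mem_G[OF n_mem]] n_cyclic] by blast
  have "\<exists>c. m *v v = c *s v" if "m \<in> N" for m
  proof (rule line)
    have "n *v (m *v v) = m *v (n *v v)"
      using abelian n_mem \<open>m \<in> N\<close> unfolding mgrp_abelian_def by (simp add: matrix_vector_mul_assoc)
    then show "n *v (m *v v) = \<mu> *s (m *v v)"
      by (simp add: eigen vector_scalar_commute)
  qed
  with \<open>v \<noteq> 0\<close> show ?thesis by blast
qed

lemma Diag_inter_not_subset: "\<not> Diag_group \<inter> G \<subseteq> N"
proof
  assume Diag_subset: "Diag_group \<inter> G \<subseteq> N"
  obtain v where "v \<noteq> 0" and eigen: "\<forall>m\<in>N. \<exists>c. m *v v = c *s v"
    using common_eigenvector by blast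
  obtain R where "finite R" "card R \<le> CARD('n) - 1"
    and decomp: "\<forall>g\<in>G. \<exists>s\<in>R. \<exists>d\<in>Diag_group \<inter> G. \<exists>m\<in>N. g = s ** d ** m"
    using stabilizer_transversal by blast
  have "g *v v \<in> vec.span ((\<lambda>s. s *v v) ` R)" if "g \<in> G" for g
  proof -
    obtain s d m where "s \<in> R" "d \<in> N" "m \<in> N" "g = s ** d ** m"
      using decomp \<open>g \<in> G\<close> Diag_subset by blast
    moreover obtain c where "(d ** m) *v v = c *s v"
      using eigen N_mult_mem \<open>d \<in> N\<close> \<open>m \<in> N\<close> by blast
    ultimately have "g *v v = c *s (s *v v)"
      by (simp add: matrix_vector_mul_assoc[symmetric] vector_scalar_commute)
    then show ?thesis
      using \<open>s \<in> R\<close> by (simp add: vec.span_base vec.span_scale)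
  qed
  then have "vec.span ((\<lambda>g. g *v v) ` G) \<subseteq> vec.span ((\<lambda>s. s *v v) ` R)"
    by (intro vec.span_minimal vec.subspace_span) auto
  then have "UNIV \<subseteq> vec.span ((\<lambda>s. s *v v) ` R)"
    unfolding orbit_span_eq_UNIV[OF \<open>v \<noteq> 0\<close>] .
  then have "vec.dim (UNIV :: (complex^'n) set) \<le> card ((\<lambda>s. s *v v) ` R)"
    using \<open>finite R\<close> by (intro vec.dim_le_card) auto
  also have "\<dots> \<le> CARD('n) - 1"
    using card_image_le[OF \<open>finite R\<close>] \<open>card R \<le> CARD('n) - 1\<close> le_trans by blast
  finally have "CARD('n) \<le> CARD('n) - 1" by (simp only: vec_dim_card)
  then show False using prime_gt_0_nat[OF prime] by linarith
qed

end

lemma (in irreducible_monomial_group) abelian_normal_subset_Diag_group: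
  assumes "prime CARD('n)" "mgrp_normal N G" "mgrp_abelian N" "Diag_group \<inter> G \<subseteq> N"
  shows "N \<subseteq> Diag_group"
proof
  fix m assume "m \<in> N"
  then have "m \<in> G" using assms(2) by (auto simp: mgrp_normal_def)
  show "m \<in> Diag_group"
  proof (rule ccontr)
    assume "m \<notin> Diag_group"
    then have "mon_perm m \<noteq> id" using Diag_group_iff[OF \<open>m \<in> G\<close>] by blast
    then interpret nondiagonal_abelian_normal_subgroup G N m
      using assms \<open>m \<in> N\<close> by unfold_locales auto
    show False using Diag_inter_not_subset assms(4) by blast
  qed
qed

theorem corollary2p13:
  fixes G :: "(complex^'n^'n) set"
  assumes "prime CARD('n)"
    and "finite G"
    and "mgrp_subgroup G"
    and "G \<subseteq> Mon_group"
    and "irreducible_mgrp G"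
  shows "maximal_abelian_normal (Diag_group \<inter> G) G"
proof -
  interpret irreducible_monomial_group G
    using assms by unfold_locales auto
  show ?thesis
    unfolding maximal_abelian_normal_def
  proof (intro conjI allI impI)
    show "mgrp_normal (Diag_group \<inter> G) G" by (rule Diag_inter_normal)
    show "mgrp_abelian (Diag_group \<inter> G)" by (rule Diag_inter_abelian)
    fix N assume N: "mgrp_normal N G \<and> mgrp_abelian N \<and> Diag_group \<inter> G \<subseteq> N"
    then have "N \<subseteq> Diag_group \<inter> G"
      using abelian_normal_subset_Diag_group[OF assms(1)] by (auto simp: mgrp_normal_def)
    with N show "N = Diag_group \<inter> G" by blast
  qed
qed

end
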